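(* In the 1-sided False Negative regime, let the moldgraph $G$ have $m$ edges and belong to a $\rho$-sparse, minor-closed family of graphs. Then the algorithm SolveSparseFN, run on $G$, performs $O(\rho m)$ queries in expectation and uncovers a realized spanning tree with probability $1$. SolveSparseFN$(G)$: if $G$ has a single vertex, return $\emptyset$. Otherwise let $u$ be a vertex of minimum degree, let $N(u)$ be the collection of super-edges incident to $u$, and let $e=\mathrm{DISCOVER}(N(u))$. Contract $e$ to obtain $G'$ and return $\mathrm{SolveSparseFN}(G')\cup\{e\}$. DISCOVER$(\mathcal{S})$, for a collection $\mathcal{S}=\{E_1,\dots,E_k\}$ of edge sets each equipped with a fixed cyclic order: repeat rounds; in each round, for $i=1,\dots,k$, query the next edge $e$ in the cyclic order of $E_i$, and if the answer is ``Yes'' return $e$.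
   Context: Problem (graph connectivity with noisy queries): a graph $G=(V,E)$, the moldgraph, with $n$ vertices and $m$ edges is given. An adversary selects an arbitrary connected spanning subgraph of $G$ to be realized. The algorithm may query an oracle on any edge $e$ (``Is $e$ realized?''), receiving ``Yes''/``No''; each query costs $1$; answers to distinct queries (including repeated queries of the same edge) are independent. Goal: output a spanning tree of $G$ all of whose edges are realized. In the 1-sided False Negative regime: for a non-realized edge the answer is always ``No''; for a realized edge the answer is ``No'' with a constant probability $p<1/2$ and ``Yes'' with probability $1-p$. Multigraph conventions: during the algorithm graphs may have parallel edges; the set of all parallel edges between two vertices $u,v$ is called a super-edge (a simple edge is a super-edge of size $1$). $N(v)$ is the set of super-edges incident to $v$, and $\deg(v)=|N(v)|$. Contracting an edge $e=\{u,v\}$ replaces $u,v$ by a new vertex adjacent to all former neighbours of $u$ or $v$; all edges parallel to $e$ are deleted (no self-loops), and super-edges that become parallel are merged into one super-edge (their union). Edges keep their identity as edges of the original moldgraph. A graph with $m$ edges and $n$ vertices is $\rho$-sparse if $m\le\rho n$. A graph $H$ is a minor of $G$ if it can be obtained by edge deletions, vertex deletions and edge contractions; a family is minor-closed if it contains all minors of its members. *)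

theory Defs
  imports "HOL-Probability.Probability"
begin

text \<open>A (finite, simple) graph is a pair (V, E): a finite vertex set and a set of
  2-element vertex sets as edges.  Vertices are natural numbers (every finite graph
  is isomorphic to one of these).\<close>

definition is_graph :: "nat set \<Rightarrow> nat set set \<Rightarrow> bool" where
  "is_graph V E \<longleftrightarrow> finite V \<and> (\<forall>e\<in>E. \<exists>a b. a \<in> V \<and> b \<in> V \<and> a \<noteq> b \<and> e = {a, b})"

text \<open>One minor step: delete an edge, delete a vertex (with incident edges), or contract
  an edge {u,v} (the merged vertex is named u; parallel edges are merged, no loops).\<close>

inductive minor_step :: "nat set \<times> nat set set \<Rightarrow> nat set \<times> nat set set \<Rightarrow> bool" where
  del_edge: "e \<in> E \<Longrightarrow> minor_step (V, E - {e}) (V, E)"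
| del_vertex: "v \<in> V \<Longrightarrow> minor_step (V - {v}, {e \<in> E. v \<notin> e}) (V, E)"
| contract: "{u, v} \<in> E \<Longrightarrow> u \<noteq> v \<Longrightarrow>
    minor_step (V - {v}, {(\<lambda>x. if x = v then u else x) ` g | g. g \<in> E \<and> g \<noteq> {u, v}}) (V, E)"

definition is_minor :: "nat set \<times> nat set set \<Rightarrow> nat set \<times> nat set set \<Rightarrow> bool" where
  "is_minor H G \<longleftrightarrow> minor_step\<^sup>*\<^sup>* H G"

definition graph_family :: "(nat set \<times> nat set set) set \<Rightarrow> bool" where
  "graph_family F \<longleftrightarrow> (\<forall>(V, E) \<in> F. is_graph V E)"

definition minor_closed :: "(nat set \<times> nat set set) set \<Rightarrow> bool" where
  "minor_closed F \<longleftrightarrow> (\<forall>G \<in> F. \<forall>H. is_minor H G \<longrightarrow> H \<in> F)"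

definition sparse_graph :: "real \<Rightarrow> nat set \<Rightarrow> nat set set \<Rightarrow> bool" where
  "sparse_graph \<rho> V E \<longleftrightarrow> real (card E) \<le> \<rho> * real (card V)"

definition sparse_family :: "real \<Rightarrow> (nat set \<times> nat set set) set \<Rightarrow> bool" where
  "sparse_family \<rho> F \<longleftrightarrow> (\<forall>(V, E) \<in> F. sparse_graph \<rho> V E)"

definition edge_rel :: "nat set set \<Rightarrow> (nat \<times> nat) set" where
  "edge_rel T = {(a, b). {a, b} \<in> T \<and> a \<noteq> b}"

definition connected_sg :: "nat set \<Rightarrow> nat set set \<Rightarrow> bool" where
  "connected_sg V T \<longleftrightarrow> (\<forall>a\<in>V. \<forall>b\<in>V. (a, b) \<in> (edge_rel T)\<^sup>*)"

text \<open>Acyclic: no edge lies on a cycle, i.e. removing any edge disconnects its endpoints.\<close>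
definition acyclic_sg :: "nat set set \<Rightarrow> bool" where
  "acyclic_sg T \<longleftrightarrow> (\<forall>a b. {a, b} \<in> T \<and> a \<noteq> b \<longrightarrow> (a, b) \<notin> (edge_rel (T - {{a, b}}))\<^sup>*)"

definition spanning_tree :: "nat set \<Rightarrow> nat set set \<Rightarrow> nat set set \<Rightarrow> bool" where
  "spanning_tree V E T \<longleftrightarrow> T \<subseteq> E \<and> connected_sg V T \<and> acyclic_sg T"

text \<open>After contracting the edge set T, the vertices are the connected components
  (classes) of (V,T); the super-edge between two distinct classes X, Y is the set of
  all original edges joining them; edges inside a class have been deleted.\<close>

definition cls :: "nat set \<Rightarrow> nat set set \<Rightarrow> nat \<Rightarrow> nat set" where
  "cls V T a = {b \<in> V. (a, b) \<in> (edge_rel T)\<^sup>*}"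

definition classes :: "nat set \<Rightarrow> nat set set \<Rightarrow> nat set set" where
  "classes V T = cls V T ` V"

definition super_edge :: "nat set set \<Rightarrow> nat set \<Rightarrow> nat set \<Rightarrow> nat set set" where
  "super_edge E X Y = {e \<in> E. \<exists>a\<in>X. \<exists>b\<in>Y. e = {a, b}}"

text \<open>N(X): super-edges incident to the vertex X of G/T; deg(X) = |N(X)|.\<close>
definition nbhd :: "nat set \<Rightarrow> nat set set \<Rightarrow> nat set set \<Rightarrow> nat set \<Rightarrow> nat set set set" where
  "nbhd V E T X = {S. \<exists>Y \<in> classes V T. Y \<noteq> X \<and> S = super_edge E X Y \<and> S \<noteq> {}}"

definition deg :: "nat set \<Rightarrow> nat set set \<Rightarrow> nat set set \<Rightarrow> nat set \<Rightarrow> nat" where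
  "deg V E T X = card (nbhd V E T X)"

text \<open>A policy resolves the arbitrary choices of the algorithm: given the set T of
  edges contracted so far, it returns the collection N(u) of super-edges incident to a
  minimum-degree vertex u of G/T, each super-edge listed in a fixed cyclic order
  (the list, read cyclically starting at its head).  The theorem quantifies over all
  valid policies.\<close>

definition valid_policy :: "nat set \<Rightarrow> nat set set \<Rightarrow> (nat set set \<Rightarrow> nat set list list) \<Rightarrow> bool" where
  "valid_policy V E pol \<longleftrightarrow>
     (\<forall>T \<subseteq> E. 2 \<le> card (classes V T) \<longrightarrow>
        (\<exists>X \<in> classes V T. (\<forall>Y \<in> classes V T. deg V E T X \<le> deg V E T Y)
            \<and> set (map set (pol T)) = nbhd V E T X
            \<and> distinct (map set (pol T))
            \<and> (\<forall>l \<in> set (pol T). distinct l)))"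

text \<open>The j-th query (j = 0,1,2,...) of DISCOVER on the lists L = [E_1,...,E_k]:
  round j div k, set E_(j mod k), next edge in its cyclic order.\<close>
definition rr_query :: "'e list list \<Rightarrow> nat \<Rightarrow> 'e" where
  "rr_query L j = (let k = length L; l = L ! (j mod k) in l ! ((j div k) mod length l))"

text \<open>Oracle randomness: an infinite stream of independent coins, coin number i used by
  the i-th query overall.  The answer to query i on edge e is Yes iff e is realized
  and coin i is True (so a realized edge gets No with probability p, a non-realized
  edge always gets No).  DISCOVER starting at global query index k returns the
  number J such that its (J+1)-th query was the first Yes (or None if it never stops).\<close>
definition discover :: "nat set set \<Rightarrow> nat set list list \<Rightarrow> bool stream \<Rightarrow> nat \<Rightarrow> nat option" where
  "discover R L \<omega> k =
     (if \<exists>j. rr_query L j \<in> R \<and> \<omega> !! (k + j)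
      then Some (LEAST j. rr_query L j \<in> R \<and> \<omega> !! (k + j)) else None)"

text \<open>solve_fn: recursion (with fuel, at most |V| contractions are ever needed); state T
  = contracted edges (= edges returned so far), k = number of queries so far.
  Returns Some (output edge set, total number of queries), or None if it does not halt.\<close>
primrec solve_fn :: "nat set \<Rightarrow> nat set set \<Rightarrow> (nat set set \<Rightarrow> nat set list list) \<Rightarrow>
    nat \<Rightarrow> nat set set \<Rightarrow> nat \<Rightarrow> bool stream \<Rightarrow> (nat set set \<times> nat) option" where
  "solve_fn V R pol 0 T k \<omega> = (if card (classes V T) \<le> 1 then Some (T, k) else None)"
| "solve_fn V R pol (Suc n) T k \<omega> =
     (if card (classes V T) \<le> 1 then Some (T, k)
      else (case discover R (pol T) \<omega> k of
              None \<Rightarrow> None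
            | Some J \<Rightarrow> solve_fn V R pol n (T \<union> {rr_query (pol T) J}) (k + J + 1) \<omega>))"

definition SolveSparseFN :: "nat set \<Rightarrow> nat set set \<Rightarrow> (nat set set \<Rightarrow> nat set list list) \<Rightarrow>
    bool stream \<Rightarrow> (nat set set \<times> nat) option" where
  "SolveSparseFN V R pol \<omega> = solve_fn V R pol (card V) {} 0 \<omega>"

definition num_queries :: "(nat set set \<times> nat) option \<Rightarrow> ennreal" where
  "num_queries r = (case r of Some (T, k) \<Rightarrow> ennreal (real k) | None \<Rightarrow> \<infinity>)"

text \<open>Coin space: each coin is True (answer Yes on a realized edge) with probability 1 - p.\<close>
definition coin_space :: "real \<Rightarrow> bool stream measure" where
  "coin_space p = stream_space (measure_pmf (bernoulli_pmf (1 - p)))"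

end

(*
  The edges contracted so far form a forest T of realized edges, and G/T is a minor of G, so a
  vertex of G/T of minimum degree has k <= 2 rho incident super-edges.  Let s be the size of a
  smallest of them that contains a realized edge.  DISCOVER visits a fixed realized edge of it
  once every k s queries, and whichever realized edge it returns deletes a whole super-edge of
  at least s edges from the edges crossing between the classes of T.  Hence the potential
  4 rho (crossing edges - s) + (queries until the next visit of that edge) + k s p / (1 - p),
  the last term paying in expectation for the restarts after false negatives, bounds the
  expected number of remaining queries; as p < 1/2 it is at most 4 rho times the number of
  crossing edges, which is m at the start.  A finite expectation forces termination almost
  surely, and the final forest is then a spanning tree.
*)

theory Submission
  imports Defs
begin

section \<open>Graphs, connectivity and classes\<close>

abbreviation conn :: "nat set set \<Rightarrow> (nat \<times> nat) set" where
  "conn T \<equiv> (edge_rel T)\<^sup>*"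

lemma sym_edge_rel: "sym (edge_rel T)"
  unfolding edge_rel_def sym_def by (auto simp: insert_commute)

lemma conn_sym: "(a, b) \<in> conn T \<Longrightarrow> (b, a) \<in> conn T"
  using sym_rtrancl[OF sym_edge_rel] by (auto dest: symD)

lemma conn_mono: "T \<subseteq> T' \<Longrightarrow> (a, b) \<in> conn T \<Longrightarrow> (a, b) \<in> conn T'"
  using rtrancl_mono[of "edge_rel T" "edge_rel T'"] unfolding edge_rel_def by blast

lemma edge_in_conn: "{a, b} \<in> T \<Longrightarrow> (a, b) \<in> conn T"
  by (cases "a = b") (auto simp: edge_rel_def)

lemma conn_empty: "conn {} = Id"
  unfolding edge_rel_def by simp

lemma conn_insert_iff:
  "(x, y) \<in> conn (insert {a, b} T) \<longleftrightarrow>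
    (x, y) \<in> conn T \<or> ((x, a) \<in> conn T \<and> (b, y) \<in> conn T) \<or> ((x, b) \<in> conn T \<and> (a, y) \<in> conn T)"
    (is "?lhs \<longleftrightarrow> ?rhs")
proof
  assume ?lhs
  then show ?rhs
  proof (induction rule: rtrancl_induct)
    case base
    then show ?case by simp
  next
    case (step y z)
    then have "(y, z) \<in> edge_rel T \<or> (y = a \<and> z = b) \<or> (y = b \<and> z = a)"
      unfolding edge_rel_def by (auto simp: doubleton_eq_iff)
    then show ?case
      using step.IH by (auto intro: rtrancl_into_rtrancl)
  qed
next
  have "(a, b) \<in> conn (insert {a, b} T)" "(b, a) \<in> conn (insert {a, b} T)"
    using edge_in_conn conn_sym by blast+
  moreover have "\<And>x y. (x, y) \<in> conn T \<Longrightarrow> (x, y) \<in> conn (insert {a, b} T)"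
    by (rule conn_mono) auto
  ultimately show "?rhs \<Longrightarrow> ?lhs"
    by (meson rtrancl_trans)
qed

lemma conn_exits_set:
  assumes "(x, y) \<in> conn T" "x \<in> X" "y \<notin> X"
  obtains c d where "{c, d} \<in> T" "c \<in> X" "d \<notin> X"
proof -
  have "y \<notin> X \<longrightarrow> (\<exists>c d. {c, d} \<in> T \<and> c \<in> X \<and> d \<notin> X)"
    using assms(1)
  proof (induction rule: rtrancl_induct)
    case base
    then show ?case using assms(2) by simp
  next
    case (step y z)
    then show ?case unfolding edge_rel_def by blast
  qed
  then show ?thesis using assms(3) that by blast
qed

lemma finite_edges: "is_graph V E \<Longrightarrow> finite E"
proof -
  assume "is_graph V E"
  then have "E \<subseteq> Pow V" "finite V" unfolding is_graph_def by auto
  then show ?thesis by (meson finite_Pow_iff finite_subset)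
qed

lemma edge_in_vertices: "is_graph V E \<Longrightarrow> {a, b} \<in> E \<Longrightarrow> a \<in> V \<and> b \<in> V"
  unfolding is_graph_def by (fastforce simp: doubleton_eq_iff)

lemma super_edge_elem:
  assumes "g \<in> super_edge E X Y"
  obtains a b where "g = {a, b}" "a \<in> X" "b \<in> Y" "g \<in> E"
  using assms unfolding super_edge_def by auto

lemma cls_self: "a \<in> V \<Longrightarrow> a \<in> cls V T a"
  unfolding cls_def by auto

lemma cls_eq: "z \<in> cls V T a \<Longrightarrow> cls V T z = cls V T a"
  unfolding cls_def by (auto intro: rtrancl_trans conn_sym)

lemma cls_eq_iff: "a \<in> V \<Longrightarrow> b \<in> V \<Longrightarrow> cls V T a = cls V T b \<longleftrightarrow> (a, b) \<in> conn T"
  by (metis (no_types, lifting) cls_def cls_eq cls_self mem_Collect_eq)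

lemma classes_eq_cls: "X \<in> classes V T \<Longrightarrow> z \<in> X \<Longrightarrow> X = cls V T z"
  unfolding classes_def using cls_eq by blast

lemma classes_eq_if_common:
  "X \<in> classes V T \<Longrightarrow> Y \<in> classes V T \<Longrightarrow> z \<in> X \<Longrightarrow> z \<in> Y \<Longrightarrow> X = Y"
  using classes_eq_cls by blast

lemma classes_subset: "X \<in> classes V T \<Longrightarrow> X \<subseteq> V"
  unfolding classes_def cls_def by auto

lemma finite_classes: "finite V \<Longrightarrow> finite (classes V T)"
  unfolding classes_def by simp

lemma classes_not_conn:
  assumes "X \<in> classes V T" "Y \<in> classes V T" "X \<noteq> Y" "a \<in> X" "b \<in> Y"
  shows "(a, b) \<notin> conn T"
  using assms classes_eq_cls classes_subset cls_eq_iff by (metis subsetD)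

lemma connected_if_card_classes_le_1:
  assumes "finite V" "card (classes V T) \<le> 1"
  shows "connected_sg V T"
  unfolding connected_sg_def
proof (intro ballI)
  fix a b assume ab: "a \<in> V" "b \<in> V"
  then have "cls V T a \<in> classes V T" "cls V T b \<in> classes V T"
    unfolding classes_def by auto
  then have "cls V T a = cls V T b"
    using card_le_Suc0_iff_eq[OF finite_classes[OF assms(1)]] assms(2) by auto
  then show "(a, b) \<in> conn T" using cls_eq_iff ab by blast
qed

section \<open>Forests grown by contraction\<close>

inductive grown_forest :: "nat set \<Rightarrow> nat set set \<Rightarrow> nat set set \<Rightarrow> bool" for V E where
  grown_forest_empty: "grown_forest V E {}"
| grown_forest_insert: "grown_forest V E T \<Longrightarrow> {a, b} \<in> E \<Longrightarrow> a \<in> V \<Longrightarrow> b \<in> V \<Longrightarrow>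
    (a, b) \<notin> conn T \<Longrightarrow> grown_forest V E (insert {a, b} T)"

lemma grown_forest_subset: "grown_forest V E T \<Longrightarrow> T \<subseteq> E"
  by (induction rule: grown_forest.induct) auto

lemma grown_forest_acyclic: "grown_forest V E T \<Longrightarrow> acyclic_sg T"
proof (induction rule: grown_forest.induct)
  case grown_forest_empty
  then show ?case unfolding acyclic_sg_def by auto
next
  case (grown_forest_insert T a b)
  have abT: "{a, b} \<notin> T" using grown_forest_insert(5) edge_in_conn by blast
  show ?case unfolding acyclic_sg_def
  proof (intro allI impI)
    fix c d assume cd: "{c, d} \<in> insert {a, b} T \<and> c \<noteq> d"
    show "(c, d) \<notin> conn (insert {a, b} T - {{c, d}})"
    proof (cases "{c, d} = {a, b}")
      case True
      then have "insert {a, b} T - {{c, d}} = T" using abT by auto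
      moreover have "(c, d) \<in> conn T \<Longrightarrow> (a, b) \<in> conn T" using True
        by (auto simp: doubleton_eq_iff intro: conn_sym)
      ultimately show ?thesis using grown_forest_insert(5) by auto
    next
      case False
      let ?T' = "T - {{c, d}}"
      have cdT: "{c, d} \<in> T" using cd False by auto
      have "insert {a, b} T - {{c, d}} = insert {a, b} ?T'" using False by auto
      moreover have "(c, d) \<notin> conn ?T'"
        using grown_forest_insert(6) cdT cd unfolding acyclic_sg_def by blast
      moreover have "\<And>x y. (x, y) \<in> conn ?T' \<Longrightarrow> (x, y) \<in> conn T" by (rule conn_mono) auto
      moreover have "(c, d) \<in> conn T" "(d, c) \<in> conn T" using edge_in_conn[OF cdT] conn_sym by blast+
      ultimately show ?thesis
        using grown_forest_insert(5) conn_insert_iff by (metis conn_sym rtrancl_trans)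
    qed
  qed
qed

definition identify :: "nat \<Rightarrow> nat \<Rightarrow> nat \<Rightarrow> nat" where
  "identify u v x = (if x = v then u else x)"

definition image_edges :: "nat set set \<Rightarrow> (nat \<Rightarrow> nat) \<Rightarrow> nat set set" where
  "image_edges E f = {{f a, f b} | a b. {a, b} \<in> E \<and> f a \<noteq> f b}"

text \<open>A contraction map names every class of the forest T by a representative vertex; its
  image graph is then the simple graph G/T, and it is a minor of G.\<close>

definition contraction_map :: "nat set \<Rightarrow> nat set set \<Rightarrow> nat set set \<Rightarrow> (nat \<Rightarrow> nat) \<Rightarrow> bool" where
  "contraction_map V E T f \<longleftrightarrow> (\<forall>x\<in>V. \<forall>y\<in>V. f x = f y \<longleftrightarrow> (x, y) \<in> conn T)
     \<and> is_minor (f ` V, image_edges E f) (V, E)"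

lemma identify_eq_iff:
  "u \<noteq> v \<Longrightarrow> identify u v x = identify u v y \<longleftrightarrow> x = y \<or> (x = u \<and> y = v) \<or> (x = v \<and> y = u)"
  unfolding identify_def by auto

lemma image_edges_identify:
  assumes uv: "u \<noteq> v"
  shows "image_edges E (identify u v \<circ> f) = {identify u v ` g | g. g \<in> image_edges E f \<and> g \<noteq> {u, v}}"
proof (intro equalityI subsetI)
  fix e assume "e \<in> image_edges E (identify u v \<circ> f)"
  then obtain c d where cd: "e = {identify u v (f c), identify u v (f d)}" "{c, d} \<in> E"
      "identify u v (f c) \<noteq> identify u v (f d)"
    unfolding image_edges_def by auto
  then have "f c \<noteq> f d" "{f c, f d} \<noteq> {u, v}"
    using identify_eq_iff[OF uv] by (auto simp: doubleton_eq_iff)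
  moreover have "{f c, f d} \<in> image_edges E f" using cd \<open>f c \<noteq> f d\<close> unfolding image_edges_def by blast
  moreover have "e = identify u v ` {f c, f d}" using cd(1) by simp
  ultimately show "e \<in> {identify u v ` g | g. g \<in> image_edges E f \<and> g \<noteq> {u, v}}"
    by blast
next
  fix e assume "e \<in> {identify u v ` g | g. g \<in> image_edges E f \<and> g \<noteq> {u, v}}"
  then obtain c d where cd: "e = identify u v ` {f c, f d}" "{c, d} \<in> E" "f c \<noteq> f d" "{f c, f d} \<noteq> {u, v}"
    unfolding image_edges_def by auto
  then have "identify u v (f c) \<noteq> identify u v (f d)"
    using identify_eq_iff[OF uv] by (auto simp: doubleton_eq_iff)
  then show "e \<in> image_edges E (identify u v \<circ> f)" using cd unfolding image_edges_def by auto
qed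

lemma contraction_map_id: "is_graph V E \<Longrightarrow> contraction_map V E {} id"
proof -
  assume g: "is_graph V E"
  have "image_edges E id = E"
    using g unfolding image_edges_def is_graph_def by fastforce
  then show ?thesis unfolding contraction_map_def is_minor_def conn_empty by auto
qed

lemma image_identify_comp:
  assumes "u \<noteq> v" "u \<in> f ` V"
  shows "(identify u v \<circ> f) ` V = f ` V - {v}"
proof (intro equalityI subsetI)
  fix w assume "w \<in> (identify u v \<circ> f) ` V"
  then show "w \<in> f ` V - {v}" using assms unfolding identify_def by auto
next
  fix w assume w: "w \<in> f ` V - {v}"
  then obtain x where "x \<in> V" "w = f x" by auto
  then show "w \<in> (identify u v \<circ> f) ` V" using w unfolding identify_def by (auto intro!: image_eqI[of _ _ x])
qed

lemma contraction_map_identify_eq_iff: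
  assumes f: "contraction_map V E T f" and ab: "a \<in> V" "b \<in> V" "(a, b) \<notin> conn T"
    and xy: "x \<in> V" "y \<in> V"
  shows "identify (f a) (f b) (f x) = identify (f a) (f b) (f y) \<longleftrightarrow> (x, y) \<in> conn (insert {a, b} T)"
proof -
  have iff: "\<And>x y. x \<in> V \<Longrightarrow> y \<in> V \<Longrightarrow> f x = f y \<longleftrightarrow> (x, y) \<in> conn T"
    using f unfolding contraction_map_def by blast
  then have "f a \<noteq> f b" using ab by blast
  then have "identify (f a) (f b) (f x) = identify (f a) (f b) (f y) \<longleftrightarrow>
      f x = f y \<or> (f x = f a \<and> f y = f b) \<or> (f x = f b \<and> f y = f a)"
    by (rule identify_eq_iff)
  also have "\<dots> \<longleftrightarrow> (x, y) \<in> conn T \<or> ((x, a) \<in> conn T \<and> (y, b) \<in> conn T)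
      \<or> ((x, b) \<in> conn T \<and> (y, a) \<in> conn T)"
    using iff xy ab by (metis (no_types, lifting))
  also have "\<dots> \<longleftrightarrow> (x, y) \<in> conn (insert {a, b} T)"
    unfolding conn_insert_iff using conn_sym by blast
  finally show ?thesis .
qed

lemma contraction_map_insert:
  assumes f: "contraction_map V E T f"
    and ab: "{a, b} \<in> E" "a \<in> V" "b \<in> V" "(a, b) \<notin> conn T"
  shows "contraction_map V E (insert {a, b} T) (identify (f a) (f b) \<circ> f)"
    and "(identify (f a) (f b) \<circ> f) ` V = f ` V - {f b}"
proof -
  define u v where "u = f a" and "v = f b"
  have uv: "u \<noteq> v" using f ab unfolding contraction_map_def u_def v_def by blast
  have "u \<in> f ` V" using ab(2) unfolding u_def by blast
  then show img: "(identify u v \<circ> f) ` V = f ` V - {v}"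
    by (rule image_identify_comp[OF uv])
  have "{u, v} \<in> image_edges E f" using ab uv unfolding image_edges_def u_def v_def by blast
  then have "minor_step (f ` V - {v}, {identify u v ` g | g. g \<in> image_edges E f \<and> g \<noteq> {u, v}})
      (f ` V, image_edges E f)"
    using minor_step.contract[OF _ uv, of _ "f ` V"] unfolding identify_def[abs_def] by simp
  then have "minor_step ((identify u v \<circ> f) ` V, image_edges E (identify u v \<circ> f)) (f ` V, image_edges E f)"
    unfolding img image_edges_identify[OF uv] .
  then have "is_minor ((identify u v \<circ> f) ` V, image_edges E (identify u v \<circ> f)) (V, E)"
    using f unfolding contraction_map_def is_minor_def by (blast intro: converse_rtranclp_into_rtranclp)
  moreover have "\<forall>x\<in>V. \<forall>y\<in>V. (identify u v \<circ> f) x = (identify u v \<circ> f) y \<longleftrightarrow> (x, y) \<in> conn (insert {a, b} T)"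
    using contraction_map_identify_eq_iff[OF f ab(2-4)] unfolding u_def v_def by simp
  ultimately show "contraction_map V E (insert {a, b} T) (identify u v \<circ> f)"
    unfolding contraction_map_def by blast
qed

lemma grown_forest_contraction_map:
  assumes "is_graph V E" "grown_forest V E T"
  obtains f where "contraction_map V E T f"
  using assms(2) that
proof (induction arbitrary: thesis rule: grown_forest.induct)
  case grown_forest_empty
  then show ?case using contraction_map_id[OF assms(1)] by blast
next
  case (grown_forest_insert T a b)
  then show ?case using contraction_map_insert(1) by metis
qed

lemma card_image_eq_if_same_fibres:
  assumes "\<And>x y. x \<in> A \<Longrightarrow> y \<in> A \<Longrightarrow> f x = f y \<longleftrightarrow> g x = g y"
  shows "card (f ` A) = card (g ` A)"
proof -
  define h where "h z = g (inv_into A f z)" for z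
  have hf: "h (f x) = g x" if "x \<in> A" for x
    using assms[of "inv_into A f (f x)" x] that by (simp add: h_def inv_into_into f_inv_into_f)
  have "inj_on h (f ` A)" by (auto intro!: inj_onI simp: hf assms)
  moreover have "h ` f ` A = g ` A" by (auto simp: hf image_iff)
  ultimately show ?thesis by (metis card_image)
qed

lemma card_classes_contraction_map:
  "contraction_map V E T f \<Longrightarrow> card (classes V T) = card (f ` V)"
  unfolding classes_def contraction_map_def
  by (rule card_image_eq_if_same_fibres) (auto simp: cls_eq_iff)

lemma card_classes_insert_less:
  assumes g: "is_graph V E" and T: "grown_forest V E T"
    and ab: "{a, b} \<in> E" "a \<in> V" "b \<in> V" "(a, b) \<notin> conn T"
  shows "card (classes V (insert {a, b} T)) < card (classes V T)"
proof -
  obtain f where f: "contraction_map V E T f" using grown_forest_contraction_map[OF g T] .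
  have "finite V" using g unfolding is_graph_def by auto
  have "card (classes V (insert {a, b} T)) = card (f ` V - {f b})"
    using card_classes_contraction_map contraction_map_insert[OF f ab] by metis
  also have "\<dots> < card (f ` V)" using \<open>finite V\<close> ab by (intro card_Diff1_less) auto
  also have "\<dots> = card (classes V T)" using card_classes_contraction_map[OF f] by simp
  finally show ?thesis .
qed

lemma spanning_tree_if_single_class:
  assumes "is_graph V E" "grown_forest V E T" "card (classes V T) \<le> 1"
  shows "spanning_tree V E T"
proof -
  have "finite V" using assms(1) unfolding is_graph_def by simp
  then show ?thesis unfolding spanning_tree_def
    using grown_forest_subset[OF assms(2)] grown_forest_acyclic[OF assms(2)]
      connected_if_card_classes_le_1[OF _ assms(3)] by blast
qed

section \<open>Minimum degree in a sparse minor-closed family\<close>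

lemma finite_image_edges: "finite E \<Longrightarrow> finite (image_edges E f)"
proof -
  assume "finite E"
  moreover have "image_edges E f \<subseteq> (\<lambda>g. f ` g) ` E"
    unfolding image_edges_def by (auto intro: rev_image_eqI)
  ultimately show ?thesis by (rule finite_surj)
qed

lemma deg_eq_card_adjacent:
  assumes X: "X \<in> classes V T"
  shows "deg V E T X = card {Y \<in> classes V T. Y \<noteq> X \<and> super_edge E X Y \<noteq> {}}"
proof -
  let ?A = "{Y \<in> classes V T. Y \<noteq> X \<and> super_edge E X Y \<noteq> {}}"
  have "inj_on (super_edge E X) ?A"
  proof (rule inj_onI)
    fix Y1 Y2 assume Y1: "Y1 \<in> ?A" and Y2: "Y2 \<in> ?A" and eq: "super_edge E X Y1 = super_edge E X Y2"
    obtain g where g: "g \<in> super_edge E X Y1" using Y1 by auto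
    obtain a b where ab: "g = {a, b}" "a \<in> X" "b \<in> Y1" using g by (rule super_edge_elem)
    obtain a' b' where ab': "g = {a', b'}" "a' \<in> X" "b' \<in> Y2" using g eq by (metis super_edge_elem)
    have "b = b' \<or> b = a'" using ab ab' by (auto simp: doubleton_eq_iff)
    then show "Y1 = Y2"
    proof
      assume "b = b'"
      then show ?thesis using classes_eq_if_common[of Y1 V T Y2 b] Y1 Y2 ab ab' by auto
    next
      assume "b = a'"
      then have "Y1 = X" using classes_eq_if_common[of Y1 V T X b] Y1 X ab ab' by auto
      then show ?thesis using Y1 by auto
    qed
  qed
  moreover have "nbhd V E T X = super_edge E X ` ?A"
    unfolding nbhd_def by auto
  ultimately show ?thesis unfolding deg_def by (simp add: card_image)
qed

lemma contraction_map_eq_iff: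
  assumes "contraction_map V E T f" "X \<in> classes V T" "Y \<in> classes V T" "x \<in> X" "y \<in> Y"
  shows "f x = f y \<longleftrightarrow> X = Y"
proof -
  have "x \<in> V" "y \<in> V" "X = cls V T x" "Y = cls V T y"
    using assms classes_subset classes_eq_cls by blast+
  then show ?thesis using assms(1) cls_eq_iff unfolding contraction_map_def by metis
qed

lemma card_ordered_pairs_le:
  fixes Q :: "nat set set"
  assumes Q: "finite Q" and P: "P \<subseteq> {(u, w). {u, w} \<in> Q \<and> u \<noteq> w}"
  shows "card P \<le> 2 * card Q"
proof -
  define P1 where "P1 = {(u, w). {u, w} \<in> Q \<and> u < w}"
  have inj: "inj_on (\<lambda>(u, w). {u, w}) P1"
    unfolding P1_def by (rule inj_onI) (auto simp: doubleton_eq_iff)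
  have sub: "(\<lambda>(u, w). {u, w}) ` P1 \<subseteq> Q"
    unfolding P1_def by auto
  have P1: "finite P1" "card P1 \<le> card Q"
    using finite_imageD[OF finite_subset[OF sub Q] inj] card_inj_on_le[OF inj sub Q] .
  have "P \<subseteq> P1 \<union> prod.swap ` P1"
    using P unfolding P1_def by (auto simp: neq_iff insert_commute image_iff)
  then have "card P \<le> card (P1 \<union> prod.swap ` P1)"
    using P1 by (intro card_mono) auto
  also have "\<dots> \<le> card P1 + card (prod.swap ` P1)" by (rule card_Un_le)
  also have "\<dots> \<le> 2 * card P1" using card_image_le[OF P1(1), of prod.swap] by simp
  finally show ?thesis using P1 by linarith
qed

lemma sum_deg_le:
  assumes g: "is_graph V E" and f: "contraction_map V E T f"
  shows "(\<Sum>Y\<in>classes V T. deg V E T Y) \<le> 2 * card (image_edges E f)"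
proof -
  let ?C = "classes V T"
  define adj where "adj Y = {Z \<in> ?C. Z \<noteq> Y \<and> super_edge E Y Z \<noteq> {}}" for Y
  define h where "h Y = f (SOME y. y \<in> Y)" for Y
  have h: "h Y = f y" if "Y \<in> ?C" "y \<in> Y" for Y y
    using someI[of "\<lambda>y. y \<in> Y", OF that(2)] contraction_map_eq_iff[OF f that(1) that(1)] that
    unfolding h_def by blast
  have fin: "finite ?C" using g finite_classes unfolding is_graph_def by blast
  have "(\<Sum>Y\<in>?C. deg V E T Y) = card (Sigma ?C adj)"
    using fin by (simp add: adj_def deg_eq_card_adjacent)
  also have "\<dots> = card ((\<lambda>(Y, Z). (h Y, h Z)) ` Sigma ?C adj)"
  proof (rule card_image[symmetric], rule inj_onI, clarify)
    have h_inj: "X = X'" if X: "X \<in> ?C" "X' \<in> ?C" "h X = h X'" for X X'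
    proof -
      obtain x x' where x: "x \<in> X" "x' \<in> X'" using X(1,2) cls_self unfolding classes_def by blast
      show ?thesis using h[OF X(1) x(1)] h[OF X(2) x(2)] contraction_map_eq_iff[OF f X(1,2) x] X(3) by simp
    qed
    fix Y Z Y' Z' assume "Y \<in> ?C" "Z \<in> adj Y" "Y' \<in> ?C" "Z' \<in> adj Y'" "h Y = h Y'" "h Z = h Z'"
    then show "Y = Y' \<and> Z = Z'" unfolding adj_def using h_inj by auto
  qed
  also have "\<dots> \<le> 2 * card (image_edges E f)"
  proof (rule card_ordered_pairs_le[OF finite_image_edges[OF finite_edges[OF g]]], clarify)
    fix Y Z assume Y: "Y \<in> ?C" and Z: "Z \<in> adj Y"
    then obtain g where "g \<in> super_edge E Y Z" unfolding adj_def by auto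
    then obtain c d where cd: "{c, d} \<in> E" "c \<in> Y" "d \<in> Z" by (metis super_edge_elem)
    have "f c \<noteq> f d" using contraction_map_eq_iff[OF f Y _ cd(2,3)] Z unfolding adj_def by auto
    then show "{h Y, h Z} \<in> image_edges E f \<and> h Y \<noteq> h Z"
      using h Y Z cd unfolding adj_def image_edges_def by auto
  qed
  finally show ?thesis .
qed

lemma min_deg_le_twice_density:
  assumes F: "graph_family F" "minor_closed F" "sparse_family \<rho> F" "(V, E) \<in> F"
    and T: "grown_forest V E T" and X: "X \<in> classes V T"
    and min: "\<forall>Y\<in>classes V T. deg V E T X \<le> deg V E T Y"
  shows "real (deg V E T X) \<le> 2 * \<rho>"
proof -
  let ?C = "classes V T"
  have g: "is_graph V E" using F unfolding graph_family_def by fastforce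
  obtain f where f: "contraction_map V E T f" using grown_forest_contraction_map[OF g T] .
  have "(f ` V, image_edges E f) \<in> F"
    using F f unfolding minor_closed_def contraction_map_def by blast
  then have sparse: "real (card (image_edges E f)) \<le> \<rho> * real (card ?C)"
    using F card_classes_contraction_map[OF f] unfolding sparse_family_def sparse_graph_def by fastforce
  have "card ?C * deg V E T X \<le> (\<Sum>Y\<in>?C. deg V E T Y)"
    using sum_bounded_below[of ?C "deg V E T X"] min by simp
  also have "\<dots> \<le> 2 * card (image_edges E f)" by (rule sum_deg_le[OF g f])
  finally have "real (card ?C) * real (deg V E T X) \<le> 2 * real (card (image_edges E f))"
    by (metis of_nat_le_iff of_nat_mult of_nat_numeral)
  also have "\<dots> \<le> real (card ?C) * (2 * \<rho>)" using sparse by (simp add: mult.commute)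
  finally have "real (card ?C) * real (deg V E T X) \<le> real (card ?C) * (2 * \<rho>)" .
  moreover have "0 < card ?C"
    using X finite_classes g unfolding is_graph_def by (auto simp: card_gt_0_iff)
  ultimately show ?thesis by simp
qed

section \<open>Progress of a single contraction\<close>

definition crossing_edges :: "nat set set \<Rightarrow> nat set set \<Rightarrow> nat set set" where
  "crossing_edges E T = {g \<in> E. \<exists>a b. g = {a, b} \<and> (a, b) \<notin> conn T}"

lemma crossing_edges_empty: "is_graph V E \<Longrightarrow> crossing_edges E {} = E"
  unfolding crossing_edges_def conn_empty is_graph_def by fastforce

lemma card_crossing_edges_insert:
  assumes E: "finite E" and XY: "X \<in> classes V T" "Y \<in> classes V T" "X \<noteq> Y"
    and e: "e \<in> super_edge E X Y"
  shows "card (crossing_edges E (insert e T)) + card (super_edge E X Y) \<le> card (crossing_edges E T)"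
proof -
  obtain a b where ab: "e = {a, b}" "a \<in> X" "b \<in> Y" using e by (rule super_edge_elem)
  have sub: "super_edge E X Y \<subseteq> crossing_edges E T"
    unfolding crossing_edges_def using classes_not_conn[OF XY] by (auto elim!: super_edge_elem)
  have "g \<notin> crossing_edges E (insert e T)" if g: "g \<in> super_edge E X Y" for g
  proof -
    obtain x y where xy: "g = {x, y}" "x \<in> X" "y \<in> Y" using g by (rule super_edge_elem)
    have "(x, a) \<in> conn T" "(b, y) \<in> conn T"
      using xy ab XY classes_eq_cls[of X V T] classes_eq_cls[of Y V T] unfolding cls_def
      by (auto intro: conn_sym)
    then have "(x, y) \<in> conn (insert e T)" "(y, x) \<in> conn (insert e T)"
      unfolding ab(1) using conn_insert_iff conn_sym by blast+
    then show ?thesis unfolding crossing_edges_def xy(1) by (auto simp: doubleton_eq_iff)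
  qed
  moreover have "crossing_edges E (insert e T) \<subseteq> crossing_edges E T"
    unfolding crossing_edges_def using conn_mono[of T "insert e T"] by blast
  ultimately have "crossing_edges E (insert e T) \<subseteq> crossing_edges E T - super_edge E X Y"
    by blast
  moreover have fin: "finite (crossing_edges E T)" using E unfolding crossing_edges_def by simp
  ultimately have "card (crossing_edges E (insert e T)) \<le> card (crossing_edges E T - super_edge E X Y)"
    by (intro card_mono) auto
  also have "\<dots> = card (crossing_edges E T) - card (super_edge E X Y)"
    using sub fin by (simp add: card_Diff_subset finite_subset)
  finally show ?thesis using card_mono[OF fin sub] by linarith
qed

lemma rr_query_eq:
  "rr_query L j = L ! (j mod length L) ! ((j div length L) mod length (L ! (j mod length L)))"
  unfolding rr_query_def Let_def ..

lemma rr_query_periodic: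
  assumes "i < length L" "q < length (L ! i)"
    and "j mod (length L * length (L ! i)) = i + length L * q"
  shows "rr_query L j = L ! i ! q"
proof -
  let ?k = "length L"
  have eq: "?k * (j div ?k mod length (L ! i)) + j mod ?k = i + ?k * q"
    using assms(3) by (simp add: mod_mult2_eq)
  have "L \<noteq> []" using assms(1) by auto
  have "j mod ?k = i"
    using arg_cong[OF eq, of "\<lambda>x. x mod ?k"] assms(1) by simp
  moreover from this have "j div ?k mod length (L ! i) = q"
    using eq \<open>L \<noteq> []\<close> by simp
  ultimately show ?thesis unfolding rr_query_eq by simp
qed

lemma residue_less: "i < k \<Longrightarrow> q < s \<Longrightarrow> i + k * q < k * (s::nat)"
proof -
  assume "i < k" "q < s"
  then have "i + k * q < k * (q + 1)" by simp
  also have "\<dots> \<le> k * s" using \<open>q < s\<close> by (intro mult_left_mono) auto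
  finally show ?thesis .
qed

lemma exists_realized_listed_edge:
  assumes g: "is_graph V E" and R: "R \<subseteq> E" "connected_sg V R"
    and X: "X \<in> classes V T" and two: "2 \<le> card (classes V T)"
    and L: "set (map set L) = nbhd V E T X"
  shows "\<exists>i<length L. \<exists>q<length (L ! i). L ! i ! q \<in> R"
proof -
  have "\<not> classes V T \<subseteq> {X}"
  proof
    assume "classes V T \<subseteq> {X}"
    then have "card (classes V T) \<le> card {X}" by (intro card_mono) auto
    then show False using two by simp
  qed
  then obtain Y where Y: "Y \<in> classes V T" "Y \<noteq> X" by blast
  obtain x y where xy: "x \<in> V" "X = cls V T x" "y \<in> V" "Y = cls V T y"
    using X Y unfolding classes_def by blast
  have "(x, y) \<in> conn R" using R(2) xy unfolding connected_sg_def by blast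
  moreover have "x \<in> X" using xy cls_self by blast
  moreover have "y \<notin> X"
    using classes_eq_if_common[OF X Y(1), of y] Y(2) cls_self[OF xy(3)] xy(4) by blast
  ultimately obtain c d where cd: "{c, d} \<in> R" "c \<in> X" "d \<notin> X" by (rule conn_exits_set)
  have d: "d \<in> V" using cd(1) R(1) edge_in_vertices[OF g] by blast
  have "cls V T d \<in> classes V T" unfolding classes_def using d by blast
  moreover have "cls V T d \<noteq> X" using cls_self[OF d] cd(3) by blast
  moreover have cd_super: "{c, d} \<in> super_edge E X (cls V T d)"
    using cd R(1) cls_self[OF d] unfolding super_edge_def by blast
  ultimately have "super_edge E X (cls V T d) \<in> nbhd V E T X"
    unfolding nbhd_def by blast
  then have "super_edge E X (cls V T d) \<in> set ` set L"
    using L by simp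
  then obtain i where i: "i < length L" "set (L ! i) = super_edge E X (cls V T d)"
    by (auto simp: in_set_conv_nth)
  moreover obtain q where "q < length (L ! i)" "L ! i ! q = {c, d}"
    using cd_super i(2) by (metis in_set_conv_nth)
  ultimately have "i < length L" "q < length (L ! i)" "L ! i ! q \<in> R" using cd(1) by auto
  then show ?thesis by blast
qed

lemma contract_listed_edge:
  fixes J :: nat
  assumes g: "is_graph V E" and T: "grown_forest V E T" and X: "X \<in> classes V T"
    and L: "set (map set L) = nbhd V E T X" "\<forall>l\<in>set L. distinct l" "L \<noteq> []"
  defines "e \<equiv> rr_query L J" and "l \<equiv> L ! (J mod length L)"
  shows "e \<in> set l" and "grown_forest V E (insert e T)"
    and "card (classes V (insert e T)) < card (classes V T)"
    and "card (crossing_edges E (insert e T)) + length l \<le> card (crossing_edges E T)"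
proof -
  have "l \<in> set L" unfolding l_def using L(3) by simp
  then have "set l \<in> nbhd V E T X" using L(1) by (metis image_eqI list.set_map)
  then obtain Y where Y: "Y \<in> classes V T" "Y \<noteq> X" "set l = super_edge E X Y" "set l \<noteq> {}"
    unfolding nbhd_def by blast
  show e: "e \<in> set l" using Y(4) unfolding e_def l_def rr_query_eq by simp
  then obtain a b where ab: "e = {a, b}" "a \<in> X" "b \<in> Y" "e \<in> E"
    using Y(3) by (auto elim: super_edge_elem)
  have ab': "(a, b) \<notin> conn T" "a \<in> V" "b \<in> V"
    using classes_not_conn[OF X Y(1) Y(2)[symmetric] ab(2,3)] classes_subset X Y(1) ab by blast+
  show "grown_forest V E (insert e T)"
    unfolding ab(1) using T ab ab' by (intro grown_forest_insert) auto
  show "card (classes V (insert e T)) < card (classes V T)"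
    unfolding ab(1) using card_classes_insert_less[OF g T] ab ab' by auto
  have "length l = card (super_edge E X Y)"
    using Y(3) L(2) \<open>l \<in> set L\<close> by (metis distinct_card)
  then show "card (crossing_edges E (insert e T)) + length l \<le> card (crossing_edges E T)"
    using card_crossing_edges_insert[OF finite_edges[OF g] X Y(1) Y(2)[symmetric]] e Y(3) by simp
qed

text \<open>In the intended instance, s is the size of a smallest listed super-edge that contains a
  realized edge, and c is the residue of the queries that visit a fixed realized edge of it.\<close>

definition guaranteed_progress ::
  "nat set \<Rightarrow> nat set set \<Rightarrow> (nat set set \<Rightarrow> nat set list list) \<Rightarrow> (nat set set \<Rightarrow> bool)
    \<Rightarrow> (nat set set \<Rightarrow> nat) \<Rightarrow> real \<Rightarrow> nat set set \<Rightarrow> nat \<Rightarrow> nat \<Rightarrow> bool" where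
  "guaranteed_progress V R pol good m \<rho> T s c \<longleftrightarrow>
     1 \<le> length (pol T) \<and> real (length (pol T)) \<le> 2 * \<rho> \<and> 1 \<le> s \<and> s \<le> m T
     \<and> c < length (pol T) * s \<and> (\<forall>j. j mod (length (pol T) * s) = c \<longrightarrow> rr_query (pol T) j \<in> R)
     \<and> (\<forall>J. rr_query (pol T) J \<in> R \<longrightarrow>
          good (insert (rr_query (pol T) J) T)
          \<and> card (classes V (insert (rr_query (pol T) J) T)) < card (classes V T)
          \<and> m (insert (rr_query (pol T) J) T) + s \<le> m T)"

lemma obtain_shortest_realized_list:
  assumes "\<exists>i<length L. \<exists>q<length (L ! i). L ! i ! q \<in> R"
  obtains i q where "i < length L" "q < length (L ! i)" "L ! i ! q \<in> R"
    and "\<And>i' q'. i' < length L \<Longrightarrow> q' < length (L ! i') \<Longrightarrow> L ! i' ! q' \<in> R \<Longrightarrow>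
      length (L ! i) \<le> length (L ! i')"
proof -
  define realized where "realized i \<longleftrightarrow> i < length L \<and> (\<exists>q < length (L ! i). L ! i ! q \<in> R)" for i
  obtain i where "realized i" using assms unfolding realized_def by blast
  then obtain i0 where "realized i0" "\<And>i. realized i \<Longrightarrow> length (L ! i0) \<le> length (L ! i)"
    using ex_has_least_nat[of realized i "\<lambda>i. length (L ! i)"] by blast
  then show ?thesis using that unfolding realized_def by blast
qed

lemma guaranteed_progress_holds:
  assumes F: "graph_family F" "minor_closed F" "sparse_family \<rho> F" "(V, E) \<in> F"
    and R: "R \<subseteq> E" "connected_sg V R" and pol: "valid_policy V E pol"
    and T: "grown_forest V E T" "T \<subseteq> R" and two: "2 \<le> card (classes V T)"
  shows "\<exists>s c. guaranteed_progress V R pol (\<lambda>T. grown_forest V E T \<and> T \<subseteq> R)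
            (\<lambda>T. card (crossing_edges E T)) \<rho> T s c"
proof -
  have g: "is_graph V E" using F unfolding graph_family_def by fastforce
  define L where "L = pol T"
  define k where "k = length L"
  obtain X where X: "X \<in> classes V T" "\<forall>Y\<in>classes V T. deg V E T X \<le> deg V E T Y"
    and L: "set (map set L) = nbhd V E T X" "distinct (map set L)" "\<forall>l\<in>set L. distinct l"
    using pol grown_forest_subset[OF T(1)] two unfolding valid_policy_def L_def by blast
  have "k = deg V E T X" unfolding k_def deg_def using L(1,2) distinct_card by fastforce
  then have k: "real k \<le> 2 * \<rho>" using min_deg_le_twice_density[OF F T(1) X] by simp
  obtain i0 q0 where q0: "i0 < k" "q0 < length (L ! i0)" "L ! i0 ! q0 \<in> R"
    and shortest: "\<And>i q. i < k \<Longrightarrow> q < length (L ! i) \<Longrightarrow> L ! i ! q \<in> R \<Longrightarrow>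
      length (L ! i0) \<le> length (L ! i)"
    using obtain_shortest_realized_list[OF exists_realized_listed_edge[OF g R X(1) two L(1)]]
    unfolding k_def by blast
  define s c where "s = length (L ! i0)" and "c = i0 + k * q0"
  have "L \<noteq> []" using q0(1) unfolding k_def by auto
  have hit: "rr_query L j \<in> R" if "j mod (k * s) = c" for j
    using rr_query_periodic[of i0 L q0 j] q0 that unfolding k_def s_def c_def by simp
  have c: "c < k * s" unfolding c_def s_def using residue_less q0(1,2) .
  have step: "grown_forest V E (insert (rr_query L J) T) \<and> insert (rr_query L J) T \<subseteq> R
      \<and> card (classes V (insert (rr_query L J) T)) < card (classes V T)
      \<and> card (crossing_edges E (insert (rr_query L J) T)) + s \<le> card (crossing_edges E T)"
    if J: "rr_query L J \<in> R" for J
  proof -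
    note contract = contract_listed_edge[OF g T(1) X(1) L(1) L(3) \<open>L \<noteq> []\<close>, of J]
    have "s \<le> length (L ! (J mod length L))"
      using contract(1) J \<open>L \<noteq> []\<close> shortest unfolding s_def k_def
      by (metis in_set_conv_nth length_greater_0_conv mod_less_divisor)
    then show ?thesis using contract(2-4) T(2) J by auto
  qed
  have "s \<le> card (crossing_edges E T)"
    using step[of c] hit[of c] c by simp
  then show ?thesis unfolding guaranteed_progress_def L_def[symmetric] k_def[symmetric]
    using k q0 c hit step by (intro exI[of _ s] exI[of _ c]) (auto simp: s_def)
qed

section \<open>The cost of a run as a function of the coins\<close>

definition first_hit :: "nat set set \<Rightarrow> nat set list list \<Rightarrow> nat \<Rightarrow> bool stream \<Rightarrow> nat option" where
  "first_hit R L j \<omega> = (if \<exists>J. rr_query L (j + J) \<in> R \<and> \<omega> !! J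
     then Some (LEAST J. rr_query L (j + J) \<in> R \<and> \<omega> !! J) else None)"

lemma discover_eq_first_hit: "discover R L \<omega> k = first_hit R L 0 (sdrop k \<omega>)"
  unfolding discover_def first_hit_def by (simp add: sdrop_snth)

lemma first_hit_Stream:
  "first_hit R L j (x ## \<omega>) =
     (if rr_query L j \<in> R \<and> x then Some 0 else map_option Suc (first_hit R L (Suc j) \<omega>))"
proof (cases "rr_query L j \<in> R \<and> x")
  case True
  then show ?thesis unfolding first_hit_def by (auto intro!: Least_equality exI[of _ 0])
next
  case False
  let ?P = "\<lambda>J. rr_query L (j + J) \<in> R \<and> (x ## \<omega>) !! J"
  let ?Q = "\<lambda>J. rr_query L (Suc j + J) \<in> R \<and> \<omega> !! J"
  have P_Suc: "?P (Suc J) = ?Q J" for J by simp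
  have "\<not> ?P 0" using False by simp
  then have ex: "(\<exists>J. ?P J) \<longleftrightarrow> (\<exists>J. ?Q J)" using P_Suc by (metis not0_implies_Suc)
  show ?thesis
  proof (cases "\<exists>J. ?Q J")
    case True
    then obtain J where "?Q J" by blast
    then have "(LEAST J. ?P J) = Suc (LEAST J. ?Q J)"
      using Least_Suc[of ?P "Suc J"] \<open>\<not> ?P 0\<close> by simp
    then show ?thesis using False True ex unfolding first_hit_def by auto
  next
    case False
    then show ?thesis using \<open>\<not> ?P 0\<close> ex unfolding first_hit_def by auto
  qed
qed

lemma solve_fn_shift:
  "solve_fn V R pol n T k \<omega> =
     map_option (\<lambda>(T', c). (T', k + c)) (solve_fn V R pol n T 0 (sdrop k \<omega>))"
proof (induction n arbitrary: T k \<omega>)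
  case 0
  then show ?case by simp
next
  case (Suc n)
  show ?case
  proof (cases "card (classes V T) \<le> 1")
    case True
    then show ?thesis by simp
  next
    case False
    have d: "discover R (pol T) \<omega> k = discover R (pol T) (sdrop k \<omega>) 0"
      by (simp add: discover_eq_first_hit)
    show ?thesis
    proof (cases "discover R (pol T) \<omega> k")
      case None
      then show ?thesis using False d by simp
    next
      case (Some J)
      let ?T' = "T \<union> {rr_query (pol T) J}"
      have "sdrop (J + 1) (sdrop k \<omega>) = sdrop (k + J + 1) \<omega>"
        by (simp only: sdrop_add, simp add: algebra_simps)
      then have "solve_fn V R pol n ?T' (J + 1) (sdrop k \<omega>) =
          map_option (\<lambda>(T', c). (T', J + 1 + c)) (solve_fn V R pol n ?T' 0 (sdrop (k + J + 1) \<omega>))"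
        using Suc.IH by metis
      then show ?thesis using False Some d Suc.IH[of ?T' "k + J + 1" \<omega>]
        by (simp del: sdrop.simps add: option.map_comp o_def case_prod_beta add.assoc
            cong: option.map_cong)
    qed
  qed
qed

definition solve_cost ::
  "nat set \<Rightarrow> nat set set \<Rightarrow> (nat set set \<Rightarrow> nat set list list) \<Rightarrow> nat \<Rightarrow> nat set set
    \<Rightarrow> bool stream \<Rightarrow> ennreal" where
  "solve_cost V R pol n T \<omega> = num_queries (solve_fn V R pol n T 0 \<omega>)"

text \<open>The number of queries still to be made when DISCOVER on pol T is about to make its
  j-th query, reading the coins from the start of \<omega>.\<close>

definition discover_cost ::
  "nat set \<Rightarrow> nat set set \<Rightarrow> (nat set set \<Rightarrow> nat set list list) \<Rightarrow> nat \<Rightarrow> nat set set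
    \<Rightarrow> nat \<Rightarrow> bool stream \<Rightarrow> ennreal" where
  "discover_cost V R pol n T j \<omega> = (case first_hit R (pol T) j \<omega> of
      None \<Rightarrow> \<infinity>
    | Some J \<Rightarrow> of_nat (J + 1)
        + solve_cost V R pol n (insert (rr_query (pol T) (j + J)) T) (sdrop (J + 1) \<omega>))"

lemma num_queries_solve_fn:
  "num_queries (solve_fn V R pol n T k \<omega>) = of_nat k + solve_cost V R pol n T (sdrop k \<omega>)"
  unfolding solve_cost_def
  by (subst solve_fn_shift) (auto simp: num_queries_def ennreal_of_nat_eq_real_of_nat split: option.splits)

lemma solve_cost_0: "solve_cost V R pol 0 T \<omega> = (if card (classes V T) \<le> 1 then 0 else \<infinity>)"
  by (simp add: solve_cost_def num_queries_def)

lemma solve_cost_Suc: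
  "solve_cost V R pol (Suc n) T \<omega> =
     (if card (classes V T) \<le> 1 then 0 else discover_cost V R pol n T 0 \<omega>)"
proof (cases "card (classes V T) \<le> 1")
  case True
  then show ?thesis by (simp add: solve_cost_def num_queries_def)
next
  case False
  have d: "discover R (pol T) \<omega> 0 = first_hit R (pol T) 0 \<omega>" by (simp add: discover_eq_first_hit)
  show ?thesis
  proof (cases "first_hit R (pol T) 0 \<omega>")
    case None
    then show ?thesis using False d by (simp add: solve_cost_def num_queries_def discover_cost_def)
  next
    case (Some J)
    have "num_queries (solve_fn V R pol n (T \<union> {rr_query (pol T) J}) (J + 1) \<omega>) =
        of_nat (J + 1) + solve_cost V R pol n (T \<union> {rr_query (pol T) J}) (sdrop (J + 1) \<omega>)"
      by (rule num_queries_solve_fn)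
    then show ?thesis using False d Some by (simp add: solve_cost_def discover_cost_def)
  qed
qed

lemma discover_cost_Stream:
  "discover_cost V R pol n T j (x ## \<omega>) =
     (if rr_query (pol T) j \<in> R \<and> x then 1 + solve_cost V R pol n (insert (rr_query (pol T) j) T) \<omega>
      else 1 + discover_cost V R pol n T (Suc j) \<omega>)"
  unfolding discover_cost_def first_hit_Stream
  by (auto split: option.splits simp: add.assoc ennreal_of_nat_eq_real_of_nat)

abbreviation coins :: "real \<Rightarrow> bool stream measure" where
  "coins q \<equiv> stream_space (measure_pmf (bernoulli_pmf q))"

lemma measurable_snth: "(\<lambda>\<omega>. \<omega> !! J) \<in> measurable (coins q) (count_space UNIV)"
proof -
  have "(\<lambda>\<omega>. \<omega> !! J) \<in> measurable (coins q) (measure_pmf (bernoulli_pmf q))" by measurable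
  then show ?thesis by (simp add: measurable_cong_sets)
qed

lemma measurable_first_hit[measurable]: "first_hit R L j \<in> measurable (coins q) (count_space UNIV)"
  unfolding first_hit_def[abs_def] using measurable_snth[measurable] by measurable

lemma measurable_solve_fn:
  "(\<lambda>\<omega>. solve_fn V R pol n T k \<omega>) \<in> measurable (coins q) (count_space UNIV)"
proof (induction n arbitrary: T k)
  case 0
  then show ?case by simp
next
  case (Suc n)
  define F where "F i \<omega> = (case i of None \<Rightarrow> None
    | Some J \<Rightarrow> solve_fn V R pol n (T \<union> {rr_query (pol T) J}) (k + J + 1) \<omega>)" for i \<omega>
  have F: "(\<lambda>\<omega>. F i \<omega>) \<in> measurable (coins q) (count_space UNIV)" if "i \<in> UNIV" for i
    unfolding F_def by (cases i) (auto simp: Suc.IH)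
  have discover: "(\<lambda>\<omega>. discover R (pol T) \<omega> k) \<in> measurable (coins q) (count_space UNIV)"
    unfolding discover_eq_first_hit by measurable
  have "(\<lambda>\<omega>. F (discover R (pol T) \<omega> k) \<omega>) \<in> measurable (coins q) (count_space UNIV)"
    by (rule measurable_compose_countable'[OF F discover]) auto
  then show ?case by (simp add: F_def)
qed

lemma measurable_solve_cost[measurable]: "solve_cost V R pol n T \<in> borel_measurable (coins q)"
proof -
  have "num_queries \<in> measurable (count_space UNIV) borel" by simp
  from measurable_compose[OF measurable_solve_fn this] show ?thesis
    unfolding solve_cost_def[abs_def] .
qed

lemma measurable_discover_cost[measurable]: "discover_cost V R pol n T j \<in> borel_measurable (coins q)"
proof -
  define F where "F i \<omega> = (case i of None \<Rightarrow> \<infinity> | Some J \<Rightarrow> of_nat (J + 1)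
    + solve_cost V R pol n (insert (rr_query (pol T) (j + J)) T) (sdrop (J + 1) \<omega>))" for i \<omega>
  have F: "(\<lambda>\<omega>. F i \<omega>) \<in> borel_measurable (coins q)" if "i \<in> UNIV" for i
    unfolding F_def by (cases i) auto
  have "(\<lambda>\<omega>. F (first_hit R (pol T) j \<omega>) \<omega>) \<in> borel_measurable (coins q)"
    by (rule measurable_compose_countable'[OF F measurable_first_hit]) auto
  then show ?thesis unfolding discover_cost_def[abs_def] F_def by simp
qed

section \<open>The potential argument\<close>

text \<open>The number of queries from the j-th one up to and including the next one whose index is
  c modulo M.\<close>

definition countdown :: "nat \<Rightarrow> nat \<Rightarrow> nat \<Rightarrow> nat" where
  "countdown M c j = nat ((int c - int j) mod int M) + 1"

lemma countdown_bounds: "0 < M \<Longrightarrow> 1 \<le> countdown M c j \<and> countdown M c j \<le> M"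
proof -
  assume "0 < M"
  then have "0 \<le> (int c - int j) mod int M" "(int c - int j) mod int M < int M" by auto
  then show ?thesis unfolding countdown_def by linarith
qed

lemma countdown_eq_1_iff:
  assumes "0 < M" "c < M"
  shows "countdown M c j = 1 \<longleftrightarrow> j mod M = c"
proof -
  have "0 \<le> (int c - int j) mod int M" using assms(1) by simp
  then have "countdown M c j = 1 \<longleftrightarrow> (int c - int j) mod int M = 0"
    unfolding countdown_def by linarith
  also have "\<dots> \<longleftrightarrow> int M dvd (int c - int j)" by (rule mod_eq_0_iff_dvd)
  also have "\<dots> \<longleftrightarrow> int c mod int M = int j mod int M" by (rule mod_eq_dvd_iff[symmetric])
  also have "\<dots> \<longleftrightarrow> c mod M = j mod M" by (metis of_nat_eq_iff of_nat_mod)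
  also have "\<dots> \<longleftrightarrow> j mod M = c" using assms(2) by auto
  finally show ?thesis .
qed

lemma countdown_Suc:
  assumes "0 < M" "c < M"
  shows "countdown M c (Suc j) = (if j mod M = c then M else countdown M c j - 1)"
proof -
  define x where "x = (int c - int j) mod int M"
  have x: "0 \<le> x" "x < int M" using assms(1) unfolding x_def by auto
  have "int c - int (Suc j) = (int c - int j) - 1" by simp
  then have "(int c - int (Suc j)) mod int M = (x - 1) mod int M"
    unfolding x_def by (metis mod_diff_left_eq)
  also have "\<dots> = (if x = 0 then int M - 1 else x - 1)"
    using x assms(1) by (auto simp: zmod_minus1 intro: mod_pos_pos_trivial)
  finally have "countdown M c (Suc j) = (if countdown M c j = 1 then M else countdown M c j - 1)"
    unfolding countdown_def x_def[symmetric] using x by auto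
  then show ?thesis using countdown_eq_1_iff[OF assms] by simp
qed

lemma min_one_plus_of_nat_Suc: "min (1 + a) (of_nat (Suc N)) = 1 + min a (of_nat N :: ennreal)"
  by (simp add: min_def add_left_mono ennreal_add_left_cancel_le)

lemma prob_space_coins: "prob_space (coins q)"
  by (rule prob_space.prob_space_stream_space) (rule prob_space_measure_pmf)

lemma nn_integral_min_one_plus:
  assumes [measurable]: "f \<in> borel_measurable (coins q)"
  shows "(\<integral>\<^sup>+\<omega>. min (1 + f \<omega>) (of_nat (Suc N)) \<partial>coins q) = 1 + (\<integral>\<^sup>+\<omega>. min (f \<omega>) (of_nat N) \<partial>coins q)"
proof -
  have "(\<integral>\<^sup>+\<omega>. min (1 + f \<omega>) (of_nat (Suc N)) \<partial>coins q) = (\<integral>\<^sup>+\<omega>. 1 + min (f \<omega>) (of_nat N) \<partial>coins q)"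
    by (simp only: min_one_plus_of_nat_Suc)
  also have "\<dots> = (\<integral>\<^sup>+\<omega>. 1 \<partial>coins q) + (\<integral>\<^sup>+\<omega>. min (f \<omega>) (of_nat N) \<partial>coins q)"
    by (rule nn_integral_add) auto
  also have "(\<integral>\<^sup>+\<omega>. 1 \<partial>coins q) = 1"
    using prob_space.emeasure_space_1[OF prob_space_coins] by simp
  finally show ?thesis .
qed

text \<open>First-step analysis: the first coin decides whether the query succeeds.\<close>

lemma nn_integral_discover_cost_Suc:
  fixes q :: real and pol :: "nat set set \<Rightarrow> nat set list list" and T :: "nat set set" and j :: nat
  assumes q: "0 \<le> q" "q \<le> 1"
  defines "e \<equiv> rr_query (pol T) j"
  shows "(\<integral>\<^sup>+\<omega>. min (discover_cost V R pol n T j \<omega>) (of_nat (Suc N)) \<partial>coins q) =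
    (1 + (if e \<in> R then \<integral>\<^sup>+\<omega>. min (solve_cost V R pol n (insert e T) \<omega>) (of_nat N) \<partial>coins q
          else \<integral>\<^sup>+\<omega>. min (discover_cost V R pol n T (Suc j) \<omega>) (of_nat N) \<partial>coins q)) * ennreal q
    + (1 + \<integral>\<^sup>+\<omega>. min (discover_cost V R pol n T (Suc j) \<omega>) (of_nat N) \<partial>coins q) * ennreal (1 - q)"
proof -
  define G where "G x = 1 + (if e \<in> R \<and> x
      then \<integral>\<^sup>+\<omega>. min (solve_cost V R pol n (insert e T) \<omega>) (of_nat N) \<partial>coins q
      else \<integral>\<^sup>+\<omega>. min (discover_cost V R pol n T (Suc j) \<omega>) (of_nat N) \<partial>coins q)" for x
  have "(\<integral>\<^sup>+\<omega>. min (discover_cost V R pol n T j \<omega>) (of_nat (Suc N)) \<partial>coins q) =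
      (\<integral>\<^sup>+x. (\<integral>\<^sup>+\<omega>. min (discover_cost V R pol n T j (x ## \<omega>)) (of_nat (Suc N)) \<partial>coins q)
        \<partial>bernoulli_pmf q)"
    by (rule prob_space.nn_integral_stream_space[OF prob_space_measure_pmf]) measurable
  also have "\<dots> = (\<integral>\<^sup>+x. G x \<partial>bernoulli_pmf q)"
  proof (rule nn_integral_cong)
    fix x
    show "(\<integral>\<^sup>+\<omega>. min (discover_cost V R pol n T j (x ## \<omega>)) (of_nat (Suc N)) \<partial>coins q) = G x"
      by (cases "e \<in> R \<and> x") (simp_all only: G_def discover_cost_Stream e_def[symmetric]
          simp_thms if_True if_False nn_integral_min_one_plus measurable_solve_cost measurable_discover_cost)
  qed
  also have "\<dots> = G True * ennreal q + G False * ennreal (1 - q)"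
    using q by (intro nn_integral_bernoulli_pmf) auto
  finally show ?thesis unfolding G_def by simp
qed

lemma discover_Some_realized: "discover R L \<omega> k = Some J \<Longrightarrow> rr_query L J \<in> R"
  unfolding discover_def
  by (auto split: if_splits intro: LeastI_ex[where P="\<lambda>j. rr_query L j \<in> R \<and> \<omega> !! (k + j)", THEN conjunct1])

lemma SUP_min_of_nat: "(SUP N. min x (of_nat N)) = (x :: ennreal)"
proof (rule antisym)
  show "(SUP N. min x (of_nat N)) \<le> x" by (rule SUP_least) simp
next
  show "x \<le> (SUP N. min x (of_nat N))"
  proof (cases "x = \<infinity>")
    case True
    have "x \<le> \<top>" by simp
    also have "\<top> = (SUP N. of_nat N :: ennreal)" by (rule ennreal_SUP_of_nat_eq_top[symmetric])
    also have "\<dots> = (SUP N. min x (of_nat N))" using True by simp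
    finally show ?thesis .
  next
    case False
    then have "x < \<top>" by (simp add: top.not_eq_extremum)
    then obtain n where "x < of_nat n" using ennreal_Ex_less_of_nat by blast
    then have "min x (of_nat n) = x" by simp
    moreover have "min x (of_nat n) \<le> (SUP N. min x (of_nat N))" by (rule SUP_upper) simp
    ultimately show ?thesis by simp
  qed
qed

lemma ennreal_mix:
  assumes "0 \<le> x" "0 \<le> y" "0 \<le> p" "p \<le> 1"
  shows "ennreal x * ennreal (1 - p) + ennreal y * ennreal p = ennreal (x * (1 - p) + y * p)"
  using assms by (simp add: ennreal_mult[symmetric] ennreal_plus[symmetric] del: ennreal_plus)

lemma drift_inequality:
  fixes p a B K M d d' :: real
  assumes "0 \<le> p" "p < 1" "a \<le> B" "K * (1 - p) = M * p" "0 \<le> K" "1 \<le> d"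
    and "d' = (if hit then M else d - 1)" "hit \<Longrightarrow> d = 1"
  shows "(1 + a) * (1 - p) + (1 + (B + d' + K)) * p \<le> B + d + K"
proof -
  have a: "(1 + a) * (1 - p) \<le> (1 + B) * (1 - p)" using assms by (intro mult_right_mono) auto
  show ?thesis
  proof (cases hit)
    case True
    then show ?thesis using a assms(4,7,8) by (simp add: algebra_simps)
  next
    case False
    then have d': "d' = d - 1" using assms(7) by simp
    have "0 \<le> (d - 1 + K) * (1 - p)" using assms by simp
    then show ?thesis unfolding d' using a by (simp add: algebra_simps)
  qed
qed

locale potential_argument =
  fixes V :: "nat set" and R :: "nat set set" and pol :: "nat set set \<Rightarrow> nat set list list"
    and good :: "nat set set \<Rightarrow> bool" and m :: "nat set set \<Rightarrow> nat" and \<rho> p :: real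
  assumes p_nonneg: "0 \<le> p" and p_less_half: "p < 1/2"
    and progress: "\<And>T. good T \<Longrightarrow> 2 \<le> card (classes V T) \<Longrightarrow>
      \<exists>s c. guaranteed_progress V R pol good m \<rho> T s c"
begin

definition progress_params :: "nat set set \<Rightarrow> nat \<times> nat" where
  "progress_params T = (SOME (s, c). guaranteed_progress V R pol good m \<rho> T s c)"

lemma guaranteed_progress_params:
  assumes "good T" "2 \<le> card (classes V T)"
  obtains s c where "progress_params T = (s, c)" "guaranteed_progress V R pol good m \<rho> T s c"
proof -
  obtain s c where "guaranteed_progress V R pol good m \<rho> T s c" using progress[OF assms] by blast
  then have "case progress_params T of (s, c) \<Rightarrow> guaranteed_progress V R pol good m \<rho> T s c"
    unfolding progress_params_def by (intro someI[of "case_prod _" "(s, c)"]) simp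
  then show ?thesis using that by (cases "progress_params T") simp
qed

text \<open>Bounds the expected number of queries still to come when DISCOVER on pol T is about to
  make its j-th query.  A false negative on the guaranteed realized edge restarts the countdown
  at k s; the last term pays for these restarts in expectation.\<close>

definition potential :: "nat set set \<Rightarrow> nat \<Rightarrow> real" where
  "potential T j = (case progress_params T of (s, c) \<Rightarrow>
     4 * \<rho> * (real (m T) - real s) + real (countdown (length (pol T) * s) c j)
     + real (length (pol T) * s) * p / (1 - p))"

lemma potential_nonneg:
  assumes "good T" "2 \<le> card (classes V T)"
  shows "0 \<le> potential T j"
proof -
  obtain s c where sc: "progress_params T = (s, c)" and "guaranteed_progress V R pol good m \<rho> T s c"
    using guaranteed_progress_params[OF assms] .
  then have "0 \<le> \<rho>" "s \<le> m T" unfolding guaranteed_progress_def by auto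
  then show ?thesis unfolding potential_def sc using p_nonneg p_less_half by simp
qed

lemma potential_0_le:
  assumes "good T" "2 \<le> card (classes V T)"
  shows "potential T 0 \<le> 4 * \<rho> * real (m T)"
proof -
  obtain s c where sc: "progress_params T = (s, c)" and gp: "guaranteed_progress V R pol good m \<rho> T s c"
    using guaranteed_progress_params[OF assms] .
  define k where "k = length (pol T)"
  have k: "1 \<le> k" "real k \<le> 2 * \<rho>" "1 \<le> s"
    using gp unfolding guaranteed_progress_def k_def by auto
  have "countdown (k * s) c 0 \<le> k * s" using countdown_bounds[of "k * s" c 0] k by simp
  then have "real (countdown (k * s) c 0) \<le> real k * real s" by (simp flip: of_nat_mult)
  moreover have "real (k * s) * p / (1 - p) \<le> real k * real s"
    using p_nonneg p_less_half mult_left_mono[of "p / (1 - p)" 1 "real (k * s)"] by (simp add: divide_le_eq)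
  moreover have "real k * real s \<le> 2 * \<rho> * real s" using k by (intro mult_right_mono) auto
  ultimately show ?thesis unfolding potential_def sc k_def[symmetric] by (simp add: algebra_simps)
qed

lemma potential_drift:
  fixes j :: nat
  assumes "good T" "2 \<le> card (classes V T)"
  defines "e \<equiv> rr_query (pol T) j"
  shows "e \<in> R \<Longrightarrow> (1 + 4 * \<rho> * real (m (insert e T))) * (1 - p) + (1 + potential T (Suc j)) * p
      \<le> potential T j"
    and "e \<notin> R \<Longrightarrow> 1 + potential T (Suc j) \<le> potential T j"
proof -
  obtain s c where sc: "progress_params T = (s, c)" and gp: "guaranteed_progress V R pol good m \<rho> T s c"
    using guaranteed_progress_params[OF assms(1,2)] .
  define k where "k = length (pol T)"
  have gp: "1 \<le> k" "real k \<le> 2 * \<rho>" "1 \<le> s" "c < k * s"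
    "\<And>j. j mod (k * s) = c \<Longrightarrow> rr_query (pol T) j \<in> R"
    "\<And>J. rr_query (pol T) J \<in> R \<Longrightarrow> m (insert (rr_query (pol T) J) T) + s \<le> m T"
    using gp unfolding guaranteed_progress_def k_def by auto
  define B K where "B = 4 * \<rho> * (real (m T) - real s)" and "K = real (k * s) * p / (1 - p)"
  define d where "d i = real (countdown (k * s) c i)" for i
  have pot: "potential T i = B + d i + K" for i
    unfolding potential_def sc B_def K_def d_def k_def by simp
  have ks: "0 < k * s" using gp by simp
  have K: "K * (1 - p) = real (k * s) * p" "0 \<le> K"
    unfolding K_def using p_nonneg p_less_half by auto
  have d1: "1 \<le> d i" for i using countdown_bounds[OF ks] unfolding d_def by simp
  have d_hit: "j mod (k * s) = c \<Longrightarrow> d j = 1"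
    using countdown_eq_1_iff[OF ks gp(4)] unfolding d_def by simp
  have d_Suc: "d (Suc j) = (if j mod (k * s) = c then real (k * s) else d j - 1)"
    using countdown_Suc[OF ks gp(4)] countdown_bounds[OF ks] unfolding d_def by simp
  show "1 + potential T (Suc j) \<le> potential T j" if "e \<notin> R"
    using gp(5)[of j] that unfolding pot d_Suc e_def by auto
  show "(1 + 4 * \<rho> * real (m (insert e T))) * (1 - p) + (1 + potential T (Suc j)) * p \<le> potential T j"
    if e: "e \<in> R"
  proof -
    have "4 * \<rho> * real (m (insert e T)) \<le> B"
      unfolding B_def using gp(6)[OF e[unfolded e_def]] gp(1,2) e_def by (intro mult_left_mono) auto
    then show ?thesis unfolding pot
      using drift_inequality[OF p_nonneg _ _ K d1[of j] d_Suc d_hit] p_less_half by simp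
  qed
qed

lemma nn_integral_min_solve_cost_le:
  assumes discover_bound: "\<And>n T j. good T \<Longrightarrow> 2 \<le> card (classes V T) \<Longrightarrow>
      card (classes V T) \<le> n + 2 \<Longrightarrow>
      (\<integral>\<^sup>+\<omega>. min (discover_cost V R pol n T j \<omega>) (of_nat N) \<partial>coins (1 - p)) \<le> ennreal (potential T j)"
    and T: "good T" "card (classes V T) \<le> n + 1"
  shows "(\<integral>\<^sup>+\<omega>. min (solve_cost V R pol n T \<omega>) (of_nat N) \<partial>coins (1 - p)) \<le> ennreal (4 * \<rho> * real (m T))"
proof (cases "card (classes V T) \<le> 1")
  case True
  then have "solve_cost V R pol n T \<omega> = 0" for \<omega> by (cases n) (auto simp: solve_cost_0 solve_cost_Suc)
  then show ?thesis by simp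
next
  case False
  then obtain n' where n: "n = Suc n'" using T(2) by (cases n) auto
  then have "(\<integral>\<^sup>+\<omega>. min (solve_cost V R pol n T \<omega>) (of_nat N) \<partial>coins (1 - p))
      = (\<integral>\<^sup>+\<omega>. min (discover_cost V R pol n' T 0 \<omega>) (of_nat N) \<partial>coins (1 - p))"
    using False by (simp add: solve_cost_Suc)
  also have "\<dots> \<le> ennreal (potential T 0)" using discover_bound T False n by simp
  also have "\<dots> \<le> ennreal (4 * \<rho> * real (m T))"
    using potential_0_le T(1) False by (intro ennreal_leI) simp
  finally show ?thesis .
qed

lemma realized_query_progress:
  assumes "good T" "2 \<le> card (classes V T)" "rr_query (pol T) J \<in> R"
  shows "good (insert (rr_query (pol T) J) T)"
    and "card (classes V (insert (rr_query (pol T) J) T)) < card (classes V T)"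
proof -
  obtain s c where "guaranteed_progress V R pol good m \<rho> T s c"
    by (metis guaranteed_progress_params assms(1,2))
  then show "good (insert (rr_query (pol T) J) T)"
    and "card (classes V (insert (rr_query (pol T) J) T)) < card (classes V T)"
    using assms(3) unfolding guaranteed_progress_def by auto
qed

lemma rho_nonneg:
  assumes "good T" "2 \<le> card (classes V T)"
  shows "0 \<le> \<rho>"
proof -
  obtain s c where "guaranteed_progress V R pol good m \<rho> T s c"
    by (metis guaranteed_progress_params assms)
  then have "1 \<le> real (length (pol T))" "real (length (pol T)) \<le> 2 * \<rho>"
    unfolding guaranteed_progress_def by auto
  then show ?thesis by linarith
qed

lemma potential_drift_ennreal:
  fixes j :: nat and I1 I2 :: ennreal
  assumes T: "good T" "2 \<le> card (classes V T)"
  defines "e \<equiv> rr_query (pol T) j"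
  assumes I1: "e \<in> R \<Longrightarrow> I1 \<le> ennreal (4 * \<rho> * real (m (insert e T)))"
    and I2: "I2 \<le> ennreal (potential T (Suc j))"
  shows "(1 + (if e \<in> R then I1 else I2)) * ennreal (1 - p) + (1 + I2) * ennreal p \<le> ennreal (potential T j)"
proof -
  have pot: "0 \<le> potential T (Suc j)" using potential_nonneg T by blast
  have I2': "1 + I2 \<le> ennreal (1 + potential T (Suc j))" using I2 pot by (simp add: add_left_mono)
  show ?thesis
  proof (cases "e \<in> R")
    case True
    define a where "a = 4 * \<rho> * real (m (insert e T))"
    have a: "0 \<le> a" unfolding a_def using rho_nonneg[OF T] by simp
    have "(1 + I1) * ennreal (1 - p) + (1 + I2) * ennreal p
        \<le> ennreal (1 + a) * ennreal (1 - p) + ennreal (1 + potential T (Suc j)) * ennreal p"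
      using I1[OF True] I2' a unfolding a_def by (intro add_mono mult_right_mono) (auto simp: add_left_mono)
    also have "\<dots> = ennreal ((1 + a) * (1 - p) + (1 + potential T (Suc j)) * p)"
      using a pot p_nonneg p_less_half by (intro ennreal_mix) auto
    also have "\<dots> \<le> ennreal (potential T j)"
      using potential_drift(1)[OF T True[unfolded e_def]] unfolding a_def e_def by (rule ennreal_leI)
    finally show ?thesis using True by simp
  next
    case False
    have "(1 + I2) * ennreal (1 - p) + (1 + I2) * ennreal p = 1 + I2"
      using p_nonneg p_less_half by (simp add: distrib_left[symmetric] ennreal_plus[symmetric] del: ennreal_plus)
    also have "\<dots> \<le> ennreal (1 + potential T (Suc j))" by (rule I2')
    also have "\<dots> \<le> ennreal (potential T j)"
      using potential_drift(2)[OF T False[unfolded e_def]] by (rule ennreal_leI)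
    finally show ?thesis using False by simp
  qed
qed

lemma nn_integral_min_discover_cost_le:
  "good T \<Longrightarrow> 2 \<le> card (classes V T) \<Longrightarrow> card (classes V T) \<le> n + 2 \<Longrightarrow>
    (\<integral>\<^sup>+\<omega>. min (discover_cost V R pol n T j \<omega>) (of_nat N) \<partial>coins (1 - p)) \<le> ennreal (potential T j)"
proof (induction N arbitrary: n T j)
  case 0
  then show ?case by simp
next
  case (Suc N)
  let ?e = "rr_query (pol T) j"
  let ?I1 = "\<integral>\<^sup>+\<omega>. min (solve_cost V R pol n (insert ?e T) \<omega>) (of_nat N) \<partial>coins (1 - p)"
  let ?I2 = "\<integral>\<^sup>+\<omega>. min (discover_cost V R pol n T (Suc j) \<omega>) (of_nat N) \<partial>coins (1 - p)"
  have "(\<integral>\<^sup>+\<omega>. min (discover_cost V R pol n T j \<omega>) (of_nat (Suc N)) \<partial>coins (1 - p))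
      = (1 + (if ?e \<in> R then ?I1 else ?I2)) * ennreal (1 - p) + (1 + ?I2) * ennreal p"
    using nn_integral_discover_cost_Suc[of "1 - p"] p_nonneg p_less_half by simp
  also have "\<dots> \<le> ennreal (potential T j)"
  proof (rule potential_drift_ennreal[OF Suc.prems(1,2)])
    assume "?e \<in> R"
    then have "good (insert ?e T)" "card (classes V (insert ?e T)) \<le> n + 1"
      using realized_query_progress[OF Suc.prems(1,2)] Suc.prems(3) by fastforce+
    then show "?I1 \<le> ennreal (4 * \<rho> * real (m (insert ?e T)))"
      by (intro nn_integral_min_solve_cost_le Suc.IH)
  next
    show "?I2 \<le> ennreal (potential T (Suc j))" by (rule Suc.IH[OF Suc.prems])
  qed
  finally show ?case .
qed

lemma nn_integral_solve_cost_le: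
  assumes "good T" "card (classes V T) \<le> n + 1"
  shows "(\<integral>\<^sup>+\<omega>. solve_cost V R pol n T \<omega> \<partial>coins (1 - p)) \<le> ennreal (4 * \<rho> * real (m T))"
proof -
  have "(\<integral>\<^sup>+\<omega>. solve_cost V R pol n T \<omega> \<partial>coins (1 - p))
      = (\<integral>\<^sup>+\<omega>. (SUP N. min (solve_cost V R pol n T \<omega>) (of_nat N)) \<partial>coins (1 - p))"
    by (simp add: SUP_min_of_nat)
  also have "\<dots> = (SUP N. \<integral>\<^sup>+\<omega>. min (solve_cost V R pol n T \<omega>) (of_nat N) \<partial>coins (1 - p))"
  proof (rule nn_integral_monotone_convergence_SUP)
    show "incseq (\<lambda>N \<omega>. min (solve_cost V R pol n T \<omega>) (of_nat N :: ennreal))"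
      unfolding incseq_def le_fun_def by (intro allI impI min.mono) auto
  qed measurable
  also have "\<dots> \<le> ennreal (4 * \<rho> * real (m T))"
    using nn_integral_min_solve_cost_le[OF nn_integral_min_discover_cost_le assms] by (intro SUP_least)
  finally show ?thesis .
qed

lemma solve_fn_Some_good:
  "good T \<Longrightarrow> solve_fn V R pol n T k \<omega> = Some (T', k') \<Longrightarrow> good T' \<and> card (classes V T') \<le> 1"
proof (induction n arbitrary: T k)
  case 0
  then show ?case by (auto split: if_splits)
next
  case (Suc n)
  show ?case
  proof (cases "card (classes V T) \<le> 1")
    case True
    then show ?thesis using Suc.prems by auto
  next
    case False
    then obtain J where J: "discover R (pol T) \<omega> k = Some J"
      "solve_fn V R pol n (insert (rr_query (pol T) J) T) (k + J + 1) \<omega> = Some (T', k')"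
      using Suc.prems by (auto split: option.splits)
    have "good (insert (rr_query (pol T) J) T)"
      using realized_query_progress(1)[OF Suc.prems(1) _ discover_Some_realized[OF J(1)]] False by simp
    then show ?thesis using Suc.IH J(2) by blast
  qed
qed

lemma nn_integral_num_queries_le:
  assumes "finite V" "good {}"
  shows "(\<integral>\<^sup>+\<omega>. num_queries (SolveSparseFN V R pol \<omega>) \<partial>coin_space p) \<le> ennreal (4 * \<rho> * real (m {}))"
proof -
  have "card (classes V {}) \<le> card V + 1"
    using card_image_le[OF assms(1), of "cls V {}"] unfolding classes_def by simp
  then show ?thesis
    using nn_integral_solve_cost_le[OF assms(2)]
    unfolding SolveSparseFN_def coin_space_def solve_cost_def by simp
qed

lemma AE_SolveSparseFN_good:
  assumes "finite V" "good {}"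
  shows "AE \<omega> in coin_space p. \<exists>T k. SolveSparseFN V R pol \<omega> = Some (T, k)
    \<and> good T \<and> card (classes V T) \<le> 1"
proof -
  have "(\<integral>\<^sup>+\<omega>. num_queries (SolveSparseFN V R pol \<omega>) \<partial>coin_space p) \<noteq> \<infinity>"
    using nn_integral_num_queries_le[OF assms] by (auto simp: top_unique)
  then have "AE \<omega> in coin_space p. num_queries (SolveSparseFN V R pol \<omega>) \<noteq> \<infinity>"
    unfolding SolveSparseFN_def coin_space_def solve_cost_def[symmetric]
    by (intro nn_integral_PInf_AE) measurable
  then show ?thesis
    by (rule eventually_mono) (auto simp: num_queries_def SolveSparseFN_def
        split: option.splits dest: solve_fn_Some_good[OF assms(2)])
qed

end

theorem lemma5:
  fixes p :: real
  assumes "0 \<le> p" and "p < 1/2"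
  shows "\<exists>C::real. \<forall>(F :: (nat set \<times> nat set set) set) (\<rho>::real) V E R pol.
     graph_family F \<and> minor_closed F \<and> sparse_family \<rho> F \<and> (V, E) \<in> F
     \<and> R \<subseteq> E \<and> connected_sg V R \<and> valid_policy V E pol \<longrightarrow>
       (\<integral>\<^sup>+ \<omega>. num_queries (SolveSparseFN V R pol \<omega>) \<partial>coin_space p)
           \<le> ennreal (C * \<rho> * real (card E))
     \<and> (AE \<omega> in coin_space p. \<exists>T k. SolveSparseFN V R pol \<omega> = Some (T, k)
           \<and> spanning_tree V E T \<and> T \<subseteq> R)"
proof (intro exI[of _ 4] allI impI conjI)
  fix F :: "(nat set \<times> nat set set) set" and \<rho> :: real and V E R pol
  assume A: "graph_family F \<and> minor_closed F \<and> sparse_family \<rho> F \<and> (V, E) \<in> F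
     \<and> R \<subseteq> E \<and> connected_sg V R \<and> valid_policy V E pol"
  then have g: "is_graph V E" unfolding graph_family_def by fastforce
  then have V: "finite V" unfolding is_graph_def by simp
  interpret potential_argument V R pol "\<lambda>T. grown_forest V E T \<and> T \<subseteq> R"
    "\<lambda>T. card (crossing_edges E T)" \<rho> p
  proof
    fix T assume "grown_forest V E T \<and> T \<subseteq> R" "2 \<le> card (classes V T)"
    then show "\<exists>s c. guaranteed_progress V R pol (\<lambda>T. grown_forest V E T \<and> T \<subseteq> R)
        (\<lambda>T. card (crossing_edges E T)) \<rho> T s c"
      using guaranteed_progress_holds[of F \<rho> V E R pol T] A by blast
  qed (use assms in auto)
  have empty: "grown_forest V E {} \<and> {} \<subseteq> R" by (simp add: grown_forest_empty)
  show "(\<integral>\<^sup>+ \<omega>. num_queries (SolveSparseFN V R pol \<omega>) \<partial>coin_space p) \<le> ennreal (4 * \<rho> * real (card E))"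
    using nn_integral_num_queries_le[OF V empty] crossing_edges_empty[OF g] by simp
  show "AE \<omega> in coin_space p. \<exists>T k. SolveSparseFN V R pol \<omega> = Some (T, k) \<and> spanning_tree V E T \<and> T \<subseteq> R"
    using AE_SolveSparseFN_good[OF V empty]
  proof (rule eventually_mono)
    fix \<omega> assume "\<exists>T k. SolveSparseFN V R pol \<omega> = Some (T, k)
      \<and> (grown_forest V E T \<and> T \<subseteq> R) \<and> card (classes V T) \<le> 1"
    then show "\<exists>T k. SolveSparseFN V R pol \<omega> = Some (T, k) \<and> spanning_tree V E T \<and> T \<subseteq> R"
      using spanning_tree_if_single_class[OF g] by blast
  qed
qed

end
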